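(* For every $\epsilon>0$, $n,k\in\mathbb N$ and $T\in M_k(\mathcal B^{(n)})$, we have $L_k(\sigma^{(n)}_T)<L^{(n)}_k(T)+\epsilon$.
   Context: $G$ is a connected compact semisimple Lie group and $l$ a continuous length function on $G$ ($l\ge0$, $l(x)=0$ iff $x=e$, $l(x^{-1})=l(x)$, $l(xy)\le l(x)+l(y)$) with $l(xyx^{-1})=l(y)$ for all $x,y$. $(U,\mathcal H)$ is a fixed irreducible unitary representation of $G$ with highest weight vector $\xi$, $\|\xi\|=1$; $P$ is the rank-one projection onto $\mathbb C\xi$ and $H$ the stability subgroup of $P$ under $x\mapsto U_xPU_x^*$. For $n\in\mathbb N$, $(U^{(n)},\mathcal H^{(n)})$ is the subrepresentation of $U^{\otimes n}$ generated by $\xi^{\otimes n}$, $P^{(n)}$ the rank-one projection onto $\mathbb C\xi^{\otimes n}$, $\mathcal B^{(n)}=\mathcal B(\mathcal H^{(n)})$ with action $\alpha^{(n)}_x(T)=U^{(n)}_xTU^{(n)*}_x$ and usual trace $\tau^{(n)}$. $\mathcal A=C(G/H)$ with left translation $(\lambda_xf)(y)=f(x^{-1}y)$. Berezin symbol: $\sigma^{(n)}_T(x)=\tau^{(n)}(T\alpha^{(n)}_x(P^{(n)}))$ for $T\in\mathcal B^{(n)}$, $x\in G/H$; for $T=[T_{ij}]\in M_k(\mathcal B^{(n)})$, $\sigma^{(n)}_T=[\sigma^{(n)}_{T_{ij}}]$. Norms: $\|f\|_{\infty,k}=\sup_x\|[f_{ij}(x)]\|_{M_k}$ on $M_k(\mathcal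 A)$; operator norm on $M_k(\mathcal B^{(n)})$. $L^{(n)}_k(T)=\sup_{x\ne e}\|[\alpha^{(n)}_x(T_{ij})-T_{ij}]\|/l(x)$ and $L_k(f)=\sup_{x\ne e}\|[\lambda_x(f_{ij})-f_{ij}]\|_{\infty,k}/l(x)$ (possibly $+\infty$). *)

theory Defs
  imports "HOL-Analysis.Analysis" "HOL-Library.Extended_Nonnegative_Real"
begin

definition adj :: "complex^'n^'m \<Rightarrow> complex^'m^'n" where
  "adj A = (\<chi> i j. cnj (A $ j $ i))"

definition cscaleM :: "complex \<Rightarrow> complex^'n^'m \<Rightarrow> complex^'n^'m" where
  "cscaleM c A = (\<chi> i j. c * A $ i $ j)"

definition cinner :: "complex^'n \<Rightarrow> complex^'n \<Rightarrow> complex" where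
  "cinner v w = (\<Sum>i\<in>UNIV. cnj (v $ i) * w $ i)"

definition unitary_mat :: "complex^'n^'n \<Rightarrow> bool" where
  "unitary_mat A \<longleftrightarrow> adj A ** A = mat 1"

definition csubspace :: "(complex^'n) set \<Rightarrow> bool" where
  "csubspace S \<longleftrightarrow> 0 \<in> S \<and> (\<forall>v\<in>S. \<forall>w\<in>S. v + w \<in> S) \<and> (\<forall>c. \<forall>v\<in>S. c *s v \<in> S)"

definition cspanV :: "(complex^'n) set \<Rightarrow> (complex^'n) set" where
  "cspanV S = {\<Sum>v\<in>F. c v *s v | F c. finite F \<and> F \<subseteq> S}"

definition cspanM :: "(complex^'n^'m) set \<Rightarrow> (complex^'n^'m) set" where
  "cspanM S = {\<Sum>A\<in>F. cscaleM (c A) A | F c. finite F \<and> F \<subseteq> S}"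

definition opnorm :: "complex^'n^'m \<Rightarrow> real" where
  "opnorm A = onorm (\<lambda>v. A *v v)"

fun mpow :: "complex^'n^'n \<Rightarrow> nat \<Rightarrow> complex^'n^'n" where
  "mpow A 0 = mat 1"
| "mpow A (Suc m) = A ** mpow A m"

definition mexp :: "complex^'n^'n \<Rightarrow> complex^'n^'n" where
  "mexp X = (\<Sum>m. (1 / fact m) *\<^sub>R mpow X m)"

definition bracket :: "complex^'n^'n \<Rightarrow> complex^'n^'n \<Rightarrow> complex^'n^'n" where
  "bracket A B = A ** B - B ** A"

text \<open>Every compact Lie group is (isomorphic to) a compact subgroup of some GL_d(C);
  conversely every compact subgroup of GL_d(C) is a Lie group (closed subgroup theorem).\<close>
definition compact_matrix_group :: "(complex^'d^'d) set \<Rightarrow> bool" where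
  "compact_matrix_group G \<longleftrightarrow> compact G \<and> mat 1 \<in> G \<and>
     (\<forall>x\<in>G. \<forall>y\<in>G. x ** y \<in> G) \<and> (\<forall>x\<in>G. invertible x \<and> matrix_inv x \<in> G)"

definition lie_alg :: "(complex^'d^'d) set \<Rightarrow> (complex^'d^'d) set" where
  "lie_alg G = {X. \<forall>t::real. mexp (t *\<^sub>R X) \<in> G}"

definition semisimple_lie_alg :: "(complex^'d^'d) set \<Rightarrow> bool" where
  "semisimple_lie_alg g \<longleftrightarrow>
     (\<forall>I. subspace I \<and> I \<subseteq> g \<and> (\<forall>X\<in>g. \<forall>Y\<in>I. bracket X Y \<in> I) \<and>
          (\<forall>X\<in>I. \<forall>Y\<in>I. bracket X Y = 0) \<longrightarrow> I = {0})"

definition connected_compact_semisimple_group :: "(complex^'d^'d) set \<Rightarrow> bool" where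
  "connected_compact_semisimple_group G \<longleftrightarrow>
     compact_matrix_group G \<and> connected G \<and> semisimple_lie_alg (lie_alg G)"

definition conj_inv_length_function :: "(complex^'d^'d) set \<Rightarrow> (complex^'d^'d \<Rightarrow> real) \<Rightarrow> bool" where
  "conj_inv_length_function G l \<longleftrightarrow> continuous_on G l \<and>
     (\<forall>x\<in>G. l x \<ge> 0) \<and> (\<forall>x\<in>G. l x = 0 \<longleftrightarrow> x = mat 1) \<and>
     (\<forall>x\<in>G. l (matrix_inv x) = l x) \<and> (\<forall>x\<in>G. \<forall>y\<in>G. l (x ** y) \<le> l x + l y) \<and>
     (\<forall>x\<in>G. \<forall>y\<in>G. l (x ** y ** matrix_inv x) = l y)"

definition unitary_rep :: "(complex^'d^'d) set \<Rightarrow> (complex^'d^'d \<Rightarrow> complex^'a^'a) \<Rightarrow> bool" where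
  "unitary_rep G U \<longleftrightarrow> continuous_on G U \<and> (\<forall>x\<in>G. unitary_mat (U x)) \<and>
     (\<forall>x\<in>G. \<forall>y\<in>G. U (x ** y) = U x ** U y)"

definition irreducible_rep :: "(complex^'d^'d) set \<Rightarrow> (complex^'d^'d \<Rightarrow> complex^'a^'a) \<Rightarrow> bool" where
  "irreducible_rep G U \<longleftrightarrow> unitary_rep G U \<and>
     (\<forall>S. csubspace S \<and> (\<forall>x\<in>G. \<forall>v\<in>S. U x *v v \<in> S) \<longrightarrow> S = {0} \<or> S = UNIV)"

definition dRep :: "(complex^'d^'d \<Rightarrow> complex^'a^'a) \<Rightarrow> complex^'d^'d \<Rightarrow> complex^'a^'a" where
  "dRep U X = vector_derivative (\<lambda>t::real. U (mexp (t *\<^sub>R X))) (at 0)"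

text \<open>complexified Lie algebra, realised inside complex matrices\<close>
definition complexify :: "(complex^'d^'d) set \<Rightarrow> (complex^'d^'d) set" where
  "complexify g = {X + cscaleM \<i> Y | X Y. X \<in> g \<and> Y \<in> g}"

definition cLie_subalg :: "(complex^'d^'d) set \<Rightarrow> bool" where
  "cLie_subalg b \<longleftrightarrow> 0 \<in> b \<and> (\<forall>A\<in>b. \<forall>B\<in>b. A + B \<in> b \<and> bracket A B \<in> b) \<and>
     (\<forall>c. \<forall>A\<in>b. cscaleM c A \<in> b)"

definition derivedM :: "(complex^'d^'d) set \<Rightarrow> (complex^'d^'d) set" where
  "derivedM S = cspanM {bracket A B | A B. A \<in> S \<and> B \<in> S}"

definition solvableM :: "(complex^'d^'d) set \<Rightarrow> bool" where
  "solvableM S \<longleftrightarrow> (\<exists>m. (derivedM ^^ m) S \<subseteq> {0})"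

definition borel_subalg :: "(complex^'d^'d) set \<Rightarrow> (complex^'d^'d) set \<Rightarrow> bool" where
  "borel_subalg g b \<longleftrightarrow> b \<subseteq> complexify g \<and> cLie_subalg b \<and> solvableM b \<and>
     (\<forall>b'. b \<subseteq> b' \<and> b' \<subseteq> complexify g \<and> cLie_subalg b' \<and> solvableM b' \<longrightarrow> b' = b)"

text \<open>highest weight vector (for some choice of maximal torus and positive roots, i.e.
  of Borel subalgebra): a nonzero common eigenvector of a Borel subalgebra\<close>
definition highest_weight_vector ::
  "(complex^'d^'d) set \<Rightarrow> (complex^'d^'d \<Rightarrow> complex^'a^'a) \<Rightarrow> complex^'a \<Rightarrow> bool" where
  "highest_weight_vector G U \<xi> \<longleftrightarrow> \<xi> \<noteq> 0 \<and>
     (\<exists>b. borel_subalg (lie_alg G) b \<and>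
        (\<forall>X\<in>lie_alg G. \<forall>Y\<in>lie_alg G. X + cscaleM \<i> Y \<in> b \<longrightarrow>
            (\<exists>c. (dRep U X + cscaleM \<i> (dRep U Y)) *v \<xi> = c *s \<xi>)))"

text \<open>The n-fold tensor power of \<open>complex^'a\<close> is \<open>complex^('n \<Rightarrow> 'a)\<close> with n = CARD('n).\<close>
definition tensU :: "complex^'a::finite^'a \<Rightarrow> complex^('n::finite \<Rightarrow> 'a)^('n \<Rightarrow> 'a)" where
  "tensU A = (\<chi> f g. \<Prod>i\<in>UNIV. A $ (f i) $ (g i))"

definition tensv :: "complex^'a::finite \<Rightarrow> complex^('n::finite \<Rightarrow> 'a)" where
  "tensv v = (\<chi> f. \<Prod>i\<in>UNIV. v $ (f i))"

definition Hn :: "(complex^'d^'d) set \<Rightarrow> (complex^'d^'d \<Rightarrow> complex^'a^'a) \<Rightarrow> complex^'a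
                    \<Rightarrow> (complex^('n::finite \<Rightarrow> 'a::finite)) set" where
  "Hn G U \<xi> = cspanV {tensU (U x) *v tensv \<xi> | x. x \<in> G}"

text \<open>B(V) for a subspace V, represented by the operators on the ambient space
  which map into V and vanish on the orthogonal complement of V\<close>
definition opsOn :: "(complex^'i) set \<Rightarrow> (complex^'i^'i) set" where
  "opsOn V = {T. (\<forall>v. T *v v \<in> V) \<and> (\<forall>v. (\<forall>w\<in>V. cinner w v = 0) \<longrightarrow> T *v v = 0)}"

definition alphan :: "(complex^'d^'d \<Rightarrow> complex^'a::finite^'a) \<Rightarrow> complex^'d^'d
     \<Rightarrow> complex^('n::finite \<Rightarrow> 'a)^('n \<Rightarrow> 'a) \<Rightarrow> complex^('n \<Rightarrow> 'a)^('n \<Rightarrow> 'a)" where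
  "alphan U x T = tensU (U x) ** T ** adj (tensU (U x))"

definition Pn :: "complex^'a::finite \<Rightarrow> complex^('n::finite \<Rightarrow> 'a)^('n \<Rightarrow> 'a)" where
  "Pn \<xi> = (\<chi> p q. tensv \<xi> $ p * cnj (tensv \<xi> $ q))"

text \<open>Berezin symbol, as a function on G (constant on the cosets xH)\<close>
definition berezin :: "(complex^'d^'d \<Rightarrow> complex^'a::finite^'a) \<Rightarrow> complex^'a
     \<Rightarrow> complex^('n::finite \<Rightarrow> 'a)^('n \<Rightarrow> 'a) \<Rightarrow> complex^'d^'d \<Rightarrow> complex" where
  "berezin U \<xi> T x = trace (T ** alphan U x (Pn \<xi>))"

text \<open>k x k block matrix over operators, as one operator on C^k \<otimes> space\<close>
definition blockop :: "('k::finite \<Rightarrow> 'k \<Rightarrow> complex^'i^'i) \<Rightarrow> complex^('k \<times> 'i)^('k \<times> 'i)" where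
  "blockop T = (\<chi> p q. T (fst p) (fst q) $ snd p $ snd q)"

definition supnormk :: "(complex^'d^'d) set \<Rightarrow> ('k::finite \<Rightarrow> 'k \<Rightarrow> complex^'d^'d \<Rightarrow> complex) \<Rightarrow> real" where
  "supnormk G f = (SUP y\<in>G. opnorm ((\<chi> i j. f i j y) :: complex^'k^'k))"

definition Lk :: "(complex^'d^'d \<Rightarrow> real) \<Rightarrow> (complex^'d^'d) set
     \<Rightarrow> ('k::finite \<Rightarrow> 'k \<Rightarrow> complex^'d^'d \<Rightarrow> complex) \<Rightarrow> ennreal" where
  "Lk l G f = (SUP x\<in>G - {mat 1}.
      ennreal (supnormk G (\<lambda>i j y. f i j (matrix_inv x ** y) - f i j y) / l x))"

definition Lnk :: "(complex^'d^'d \<Rightarrow> real) \<Rightarrow> (complex^'d^'d) set \<Rightarrow> (complex^'d^'d \<Rightarrow> complex^'a::finite^'a)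
     \<Rightarrow> ('k::finite \<Rightarrow> 'k \<Rightarrow> complex^('n::finite \<Rightarrow> 'a)^('n \<Rightarrow> 'a)) \<Rightarrow> ennreal" where
  "Lnk l G U T = (SUP x\<in>G - {mat 1}.
      ennreal (opnorm (blockop (\<lambda>i j. alphan U x (T i j) - T i j)) / l x))"

end

theory Submission
  imports Defs
begin

text \<open>The Berezin symbol is equivariant, \<open>\<sigma>\<^sub>T(x\<^sup>-\<^sup>1y) = \<sigma>\<^bsub>\<alpha>\<^sub>x(T)\<^esub>(y)\<close>, and \<open>\<sigma>\<^sub>T(y)\<close> is the
  compression of \<open>T\<close> to the unit vector \<open>U\<^sup>(\<^sup>n\<^sup>)\<^sub>y \<xi>\<^sup>\<otimes>\<^sup>n\<close>; since compressing a block matrix to a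
  unit vector does not increase its norm, \<open>L\<^sub>k(\<sigma>\<^sub>T) \<le> L\<^sup>(\<^sup>n\<^sup>)\<^sub>k(T)\<close>. The inequality stays strict
  after adding \<open>\<epsilon>\<close> because \<open>L\<^sup>(\<^sup>n\<^sup>)\<^sub>k(T)\<close> is finite: \<open>\<parallel>\<alpha>\<^sub>x(T) - T\<parallel> = O(\<parallel>V\<^sub>x - 1\<parallel>)\<close> for the unitary
  representation \<open>V = U\<^sup>\<otimes>\<^sup>n\<close>, and \<open>\<parallel>V\<^sub>x - 1\<parallel> = O(l(x))\<close>. For the latter, a matrix whose first \<open>M\<close>
  powers stay within \<open>1/2\<close> of the identity is within \<open>1/M\<close> of it; so some power \<open>x\<^sup>j\<close> with
  \<open>j \<le> 1 + 1/\<parallel>V\<^sub>x - 1\<parallel>\<close> has \<open>\<parallel>V\<^bsub>x\<^sup>j\<^esub> - 1\<parallel> > 1/2\<close>, where by compactness \<open>l\<close> is bounded below by some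
  \<open>c > 0\<close>, and subadditivity gives \<open>c \<le> l(x\<^sup>j) \<le> j l(x)\<close>.\<close>

subsection \<open>Matrix norms, adjoints and powers\<close>

lemma norm_vec_power2: "(norm (x::'a::real_normed_vector^'n))\<^sup>2 = (\<Sum>i\<in>UNIV. (norm (x$i))\<^sup>2)"
  by (simp add: norm_vec_def L2_set_def sum_nonneg)

lemma norm_matrix_power2: "(norm (A::complex^'n^'m))\<^sup>2 = (\<Sum>i\<in>UNIV. \<Sum>j\<in>UNIV. (cmod (A$i$j))\<^sup>2)"
  by (simp add: norm_vec_power2)

lemma cmod_sum_mult_power2_le:
  "(cmod (\<Sum>i\<in>S. a i * b i))\<^sup>2 \<le> (\<Sum>i\<in>S. (cmod (a i))\<^sup>2) * (\<Sum>i\<in>S. (cmod (b i))\<^sup>2)"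
proof -
  have "cmod (\<Sum>i\<in>S. a i * b i) \<le> (\<Sum>i\<in>S. cmod (a i) * cmod (b i))"
    using norm_sum[of "\<lambda>i. a i * b i" S] by (simp add: norm_mult)
  then have "(cmod (\<Sum>i\<in>S. a i * b i))\<^sup>2 \<le> (\<Sum>i\<in>S. cmod (a i) * cmod (b i))\<^sup>2"
    by (simp add: power_mono)
  also have "\<dots> \<le> (\<Sum>i\<in>S. (cmod (a i))\<^sup>2) * (\<Sum>i\<in>S. (cmod (b i))\<^sup>2)"
    by (rule Cauchy_Schwarz_ineq_sum)
  finally show ?thesis .
qed

lemma norm_matrix_vector_mult_le: "norm ((A::complex^'n^'m) *v v) \<le> norm A * norm v"
proof -
  have "(norm (A *v v))\<^sup>2 = (\<Sum>i\<in>UNIV. (cmod (\<Sum>j\<in>UNIV. A$i$j * v$j))\<^sup>2)"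
    by (simp add: norm_vec_power2 matrix_vector_mult_def)
  also have "\<dots> \<le> (\<Sum>i\<in>UNIV. (\<Sum>j\<in>UNIV. (cmod (A$i$j))\<^sup>2) * (\<Sum>j\<in>UNIV. (cmod (v$j))\<^sup>2))"
    by (intro sum_mono cmod_sum_mult_power2_le)
  also have "\<dots> = (norm A * norm v)\<^sup>2"
    by (simp add: norm_matrix_power2 norm_vec_power2 power_mult_distrib sum_distrib_right)
  finally show ?thesis by (rule power2_le_imp_le) simp
qed

lemma norm_matrix_mult_le: "norm ((A::complex^'n^'m) ** (B::complex^'p^'n)) \<le> norm A * norm B"
proof -
  have "(norm (A ** B))\<^sup>2 = (\<Sum>i\<in>UNIV. \<Sum>k\<in>UNIV. (cmod (\<Sum>j\<in>UNIV. A$i$j * B$j$k))\<^sup>2)"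
    by (simp add: norm_matrix_power2 matrix_matrix_mult_def)
  also have "\<dots> \<le> (\<Sum>i\<in>UNIV. \<Sum>k\<in>UNIV. (\<Sum>j\<in>UNIV. (cmod (A$i$j))\<^sup>2) * (\<Sum>j\<in>UNIV. (cmod (B$j$k))\<^sup>2))"
    by (intro sum_mono cmod_sum_mult_power2_le)
  also have "\<dots> = (\<Sum>i\<in>UNIV. \<Sum>j\<in>UNIV. (cmod (A$i$j))\<^sup>2) * (\<Sum>k\<in>UNIV. \<Sum>j\<in>UNIV. (cmod (B$j$k))\<^sup>2)"
    by (rule sum_product[symmetric])
  also have "\<dots> = (norm A * norm B)\<^sup>2"
    unfolding norm_matrix_power2 power_mult_distrib by (subst (2) sum.swap) (rule refl)
  finally show ?thesis by (rule power2_le_imp_le) simp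
qed

lemma norm_matrix_vector_mult_le_opnorm: "norm ((A::complex^'n^'m) *v v) \<le> opnorm A * norm v"
  unfolding opnorm_def by (rule onorm) (rule matrix_vector_mul_bounded_linear)

lemma opnorm_leI: "(\<And>v. norm ((A::complex^'n^'m) *v v) \<le> b * norm v) \<Longrightarrow> opnorm A \<le> b"
  unfolding opnorm_def by (rule onorm_le)

lemma opnorm_le_norm: "opnorm (A::complex^'n^'m) \<le> norm A"
  by (rule opnorm_leI) (rule norm_matrix_vector_mult_le)

lemma matrix_diff_ldistrib: "(A::'a::ring_1^'n^'m) ** (B - C) = A ** B - A ** C"
  by (simp add: matrix_matrix_mult_def vec_eq_iff sum_subtractf right_diff_distrib)

lemma matrix_diff_rdistrib: "((A::'a::ring_1^'n^'m) - B) ** C = A ** C - B ** C"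
  by (simp add: matrix_matrix_mult_def vec_eq_iff sum_subtractf left_diff_distrib)

lemma adj_nth [simp]: "adj A $ i $ j = cnj (A $ j $ i)"
  by (simp add: adj_def)

lemma adj_adj [simp]: "adj (adj A) = A"
  by (simp add: vec_eq_iff)

lemma adj_mult: "adj (A ** B) = adj B ** adj A"
  by (simp add: vec_eq_iff matrix_matrix_mult_def mult.commute)

lemma adj_diff: "adj (A - B) = adj A - adj B"
  by (simp add: vec_eq_iff)

lemma adj_one [simp]: "adj (mat 1) = mat 1"
  by (simp add: vec_eq_iff mat_def)

lemma norm_adj: "norm (adj A) = norm A"
proof -
  have "(norm (adj A))\<^sup>2 = (norm A)\<^sup>2"
    unfolding norm_matrix_power2 by (simp, rule sum.swap)
  then show ?thesis by (simp add: power2_eq_iff_nonneg)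
qed

lemma cinner_adj: "cinner (A *v v) w = cinner v (adj A *v w)"
proof -
  have "cinner (A *v v) w = (\<Sum>i\<in>UNIV. \<Sum>j\<in>UNIV. cnj (A$i$j) * cnj (v$j) * w$i)"
    by (simp add: cinner_def matrix_vector_mult_def sum_distrib_right)
  also have "\<dots> = (\<Sum>j\<in>UNIV. \<Sum>i\<in>UNIV. cnj (A$i$j) * cnj (v$j) * w$i)"
    by (rule sum.swap)
  also have "\<dots> = cinner v (adj A *v w)"
    by (simp add: cinner_def matrix_vector_mult_def sum_distrib_left mult_ac)
  finally show ?thesis .
qed

lemma cinner_self: "cinner v v = complex_of_real ((norm v)\<^sup>2)"
  unfolding cinner_def norm_vec_power2 of_real_sum complex_norm_square by (simp add: mult.commute)

lemma norm_power2_eq_trace: "complex_of_real ((norm A)\<^sup>2) = trace (adj A ** A)"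
  unfolding norm_matrix_power2 of_real_sum complex_norm_square
  by (simp add: trace_def matrix_matrix_mult_def mult.commute) (rule sum.swap)

lemma norm_unitary_mult_vector:
  assumes "adj A ** A = mat 1"
  shows "norm (A *v v) = norm v"
proof -
  have "cinner (A *v v) (A *v v) = cinner v v"
    by (simp add: cinner_adj matrix_vector_mul_assoc assms)
  then have "(norm (A *v v))\<^sup>2 = (norm v)\<^sup>2"
    by (simp only: cinner_self of_real_eq_iff)
  then show ?thesis by (simp add: power2_eq_iff_nonneg)
qed

lemma norm_unitary:
  fixes A :: "complex^'n^'m"
  assumes "adj A ** A = mat 1"
  shows "norm A = norm (mat 1 :: complex^'n^'n)"
proof -
  have "complex_of_real ((norm A)\<^sup>2) = complex_of_real ((norm (mat 1 :: complex^'n^'n))\<^sup>2)"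
    by (simp only: norm_power2_eq_trace assms adj_one matrix_mul_lid)
  then show ?thesis by (metis of_real_eq_iff norm_ge_zero power2_eq_iff_nonneg)
qed

lemma norm_unitary_conj_diff_le:
  fixes T :: "complex^'n^'n"
  assumes "adj W ** W = mat 1"
  shows "norm (W ** T ** adj W - T) \<le> (norm (mat 1 :: complex^'n^'n) + 1) * norm T * norm (W - mat 1)"
proof -
  have "W ** T ** adj W - T = (W - mat 1) ** T ** adj W + T ** adj (W - mat 1)"
    by (simp add: matrix_diff_rdistrib matrix_diff_ldistrib adj_diff)
  then have "norm (W ** T ** adj W - T) \<le> norm ((W - mat 1) ** T ** adj W) + norm (T ** adj (W - mat 1))"
    by (metis norm_triangle_ineq)
  also have "\<dots> \<le> norm (W - mat 1) * norm T * norm (adj W) + norm T * norm (W - mat 1)"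
    by (intro add_mono order_trans[OF norm_matrix_mult_le] mult_right_mono norm_matrix_mult_le
        norm_ge_zero) (simp add: norm_adj)
  also have "\<dots> = (norm (mat 1 :: complex^'n^'n) + 1) * norm T * norm (W - mat 1)"
    by (simp add: norm_adj norm_unitary[OF assms] algebra_simps)
  finally show ?thesis .
qed

lemma mpow_telescope:
  fixes V :: "complex^'n^'n"
  shows "(\<Sum>j<M. V - mat 1) = (mpow V M - mat 1) + (V - mat 1) ** (\<Sum>j<M. mat 1 - mpow V j)"
proof (induction M)
  case 0
  then show ?case by simp
next
  case (Suc M)
  let ?S = "\<Sum>j<M. mat 1 - mpow V j"
  have "(V - mat 1) ** (?S + (mat 1 - mpow V M))
      = (V - mat 1) ** ?S + (V - mat 1) - (mpow V (Suc M) - mpow V M)"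
    by (simp only: matrix_add_ldistrib matrix_diff_ldistrib matrix_diff_rdistrib matrix_mul_rid
        mpow.simps) (simp add: algebra_simps)
  then show ?case
    using Suc by (simp only: sum.lessThan_Suc) (simp add: algebra_simps)
qed

lemma norm_diff_one_le_if_mpow_near_one:
  fixes V :: "complex^'n^'n"
  assumes M: "M \<ge> 1" and near: "\<And>j. 1 \<le> j \<Longrightarrow> j \<le> M \<Longrightarrow> norm (mpow V j - mat 1) \<le> 1/2"
  shows "norm (V - mat 1) \<le> 1 / real M"
proof -
  let ?f = "norm (V - mat 1)"
  have "norm (mat 1 - mpow V j) \<le> 1/2" if "j < M" for j
    using near[of j] that by (cases "j = 0") (simp_all add: norm_minus_commute)
  then have "norm (\<Sum>j<M. mat 1 - mpow V j) \<le> (\<Sum>j<M. 1/2)"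
    by (intro order_trans[OF norm_sum] sum_mono) simp
  then have sum_le: "norm (\<Sum>j<M. mat 1 - mpow V j) \<le> real M / 2"
    by simp
  have "real M * ?f = norm (\<Sum>j<M. V - mat 1)"
    by (simp only: sum_constant_scaleR norm_scaleR card_lessThan abs_of_nat)
  also have "\<dots> \<le> norm (mpow V M - mat 1) + ?f * norm (\<Sum>j<M. mat 1 - mpow V j)"
    unfolding mpow_telescope by (rule order_trans[OF norm_triangle_ineq add_left_mono[OF norm_matrix_mult_le]])
  also have "\<dots> \<le> 1/2 + ?f * (real M / 2)"
    using near[of M] M sum_le by (intro add_mono mult_left_mono) auto
  finally have "real M * ?f \<le> 1" by (simp add: field_simps)
  then show ?thesis using M by (simp add: field_simps)
qed

lemma exists_mpow_far_from_one:
  fixes V :: "complex^'n^'n"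
  assumes "V \<noteq> mat 1"
  obtains j where "1 \<le> j" "real j \<le> 1 / norm (V - mat 1) + 1" "norm (mpow V j - mat 1) > 1/2"
proof -
  define M where "M = nat \<lfloor>1 / norm (V - mat 1)\<rfloor> + 1"
  have pos: "norm (V - mat 1) > 0" using assms by simp
  then have "real M = of_int \<lfloor>1 / norm (V - mat 1)\<rfloor> + 1"
    by (simp add: M_def)
  then have M: "M \<ge> 1" "1 / norm (V - mat 1) < real M" "real M \<le> 1 / norm (V - mat 1) + 1"
    unfolding M_def by linarith+
  then have "\<not> norm (V - mat 1) \<le> 1 / real M"
    using pos by (simp add: field_simps)
  then obtain j where "1 \<le> j" "j \<le> M" "norm (mpow V j - mat 1) > 1/2"
    using norm_diff_one_le_if_mpow_near_one[OF M(1)] by (meson not_le)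
  then show ?thesis
    using that M(3) by (meson of_nat_le_iff order_trans)
qed

subsection \<open>Unitary representations and length functions\<close>

lemma sum_prod_funs:
  "(\<Sum>f\<in>(UNIV::('n::finite \<Rightarrow> 'a::finite) set). \<Prod>i\<in>UNIV. g i (f i))
     = (\<Prod>i\<in>UNIV. \<Sum>a\<in>UNIV. (g i a :: 'c::comm_semiring_1))"
  using prod_sum_PiE[of "UNIV::'n set" "\<lambda>_. UNIV::'a set" g] by simp

lemma tensU_mult:
  "tensU A ** tensU B = (tensU (A ** B) :: complex^('n::finite \<Rightarrow> 'a::finite)^('n \<Rightarrow> 'a))"
proof -
  have "(\<Sum>g\<in>UNIV. (\<Prod>i\<in>UNIV. A $ f i $ g i) * (\<Prod>i\<in>UNIV. B $ g i $ h i))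
        = (\<Prod>i\<in>UNIV. (A ** B) $ f i $ h i)" for f h :: "'n \<Rightarrow> 'a"
    using sum_prod_funs[of "\<lambda>i b. A $ f i $ b * B $ b $ h i"]
    by (simp add: prod.distrib matrix_matrix_mult_def)
  then show ?thesis
    by (simp add: vec_eq_iff tensU_def matrix_matrix_mult_def)
qed

lemma tensU_one: "(tensU (mat 1) :: complex^('n::finite \<Rightarrow> 'a::finite)^('n \<Rightarrow> 'a)) = mat 1"
proof -
  have "(\<Prod>i\<in>UNIV. (mat 1 :: complex^'a^'a) $ f i $ g i) = (if f = g then 1 else 0)"
    for f g :: "'n \<Rightarrow> 'a"
  proof (cases "f = g")
    case False
    then obtain i where "f i \<noteq> g i" by auto
    then show ?thesis
      using False by (intro trans[OF prod_zero]) (auto simp: mat_def)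
  qed (simp add: mat_def)
  then show ?thesis by (simp add: vec_eq_iff tensU_def mat_def)
qed

lemma adj_tensU: "adj (tensU A) = (tensU (adj A) :: complex^('n::finite \<Rightarrow> 'a::finite)^('n \<Rightarrow> 'a))"
  by (simp add: vec_eq_iff tensU_def cnj_prod)

lemma norm_tensv:
  assumes "norm \<xi> = 1"
  shows "norm (tensv \<xi> :: complex^('n::finite \<Rightarrow> 'a::finite)) = 1"
proof -
  have "(norm (tensv \<xi> :: complex^('n \<Rightarrow> 'a)))\<^sup>2
      = (\<Sum>f\<in>(UNIV::('n\<Rightarrow>'a) set). \<Prod>i\<in>UNIV. (cmod (\<xi> $ f i))\<^sup>2)"
    by (simp add: norm_vec_power2 tensv_def prod_norm[symmetric] prod_power_distrib)
  also have "\<dots> = (\<Prod>i\<in>(UNIV::'n set). \<Sum>a\<in>UNIV. (cmod (\<xi> $ a))\<^sup>2)"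
    by (rule sum_prod_funs)
  also have "\<dots> = 1"
    using assms by (simp add: norm_vec_power2[symmetric])
  finally show ?thesis
    using norm_ge_zero[of "tensv \<xi> :: complex^('n \<Rightarrow> 'a)"] by (simp add: power2_eq_1_iff)
qed

lemma unitary_rep_one:
  assumes "unitary_rep G U" "mat 1 \<in> G"
  shows "U (mat 1) = mat 1"
proof -
  let ?u = "U (mat 1)"
  have idem: "?u ** ?u = ?u" and unitary: "adj ?u ** ?u = mat 1"
    using assms unfolding unitary_rep_def unitary_mat_def by (metis matrix_mul_lid)+
  have "?u = adj ?u ** (?u ** ?u)"
    by (simp add: matrix_mul_assoc unitary)
  then show ?thesis by (simp add: idem unitary)
qed

lemma unitary_rep_tensU:
  assumes "unitary_rep G U"
  shows "unitary_rep G (\<lambda>x. tensU (U x) :: complex^('n::finite \<Rightarrow> 'a::finite)^('n \<Rightarrow> 'a))"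
proof -
  have "continuous_on G U" "\<forall>x\<in>G. adj (U x) ** U x = mat 1"
    "\<forall>x\<in>G. \<forall>y\<in>G. U (x ** y) = U x ** U y"
    using assms by (auto simp: unitary_rep_def unitary_mat_def)
  moreover from this(1) have "continuous_on G (\<lambda>x. tensU (U x) :: complex^('n \<Rightarrow> 'a)^('n \<Rightarrow> 'a))"
    unfolding tensU_def by (intro continuous_on_vec_lambda continuous_on_prod continuous_on_component)
  ultimately show ?thesis
    by (simp add: unitary_rep_def unitary_mat_def adj_tensU tensU_mult tensU_one)
qed

lemma matrix_inv_left:
  fixes x :: "'a::field^'n^'n"
  assumes "invertible x"
  shows "matrix_inv x ** x = mat 1"
  using someI_ex[OF assms[unfolded invertible_def]] by (simp add: matrix_inv_def)

lemma unitary_rep_matrix_inv: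
  assumes G: "compact_matrix_group G" and V: "unitary_rep G V" and x: "x \<in> G"
  shows "V (matrix_inv x) = adj (V x)"
proof -
  have inv: "invertible x" "matrix_inv x \<in> G" and one: "mat 1 \<in> G"
    using G x unfolding compact_matrix_group_def by auto
  have "adj (V x) ** V x = mat 1"
    using V x by (simp add: unitary_rep_def unitary_mat_def)
  then have right_inv: "V x ** adj (V x) = mat 1"
    by (simp add: matrix_left_right_inverse)
  have left_inv: "V (matrix_inv x) ** V x = mat 1"
    using V inv x unitary_rep_one[OF V one] matrix_inv_left[OF inv(1)]
    by (metis unitary_rep_def)
  have "V (matrix_inv x) = V (matrix_inv x) ** (V x ** adj (V x))"
    by (simp add: right_inv)
  also have "\<dots> = adj (V x)"
    unfolding matrix_mul_assoc left_inv by simp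
  finally show ?thesis .
qed

lemma mpow_in_group:
  assumes "compact_matrix_group G" "x \<in> G"
  shows "mpow x j \<in> G"
  using assms by (induction j) (auto simp: compact_matrix_group_def)

lemma unitary_rep_mpow:
  assumes G: "compact_matrix_group G" and V: "unitary_rep G V" and x: "x \<in> G"
  shows "V (mpow x j) = mpow (V x) j"
proof (induction j)
  case 0
  show ?case using unitary_rep_one[OF V] G by (simp add: compact_matrix_group_def)
next
  case (Suc j)
  then show ?case
    using V x mpow_in_group[OF G x] by (simp add: unitary_rep_def)
qed

lemma length_mpow_le:
  assumes "compact_matrix_group G" "conj_inv_length_function G l" "x \<in> G"
  shows "l (mpow x j) \<le> real j * l x"
proof (induction j)
  case 0
  then show ?case
    using assms(1,2) by (auto simp: compact_matrix_group_def conj_inv_length_function_def)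
next
  case (Suc j)
  have "l (mpow x (Suc j)) \<le> l x + l (mpow x j)"
    using assms mpow_in_group[OF assms(1,3)] unfolding conj_inv_length_function_def by simp
  then show ?case using Suc by (simp add: algebra_simps)
qed

lemma length_bounded_below_on_compact:
  assumes "conj_inv_length_function G l" "compact K" "K \<subseteq> G" "mat 1 \<notin> K"
  obtains c where "c > 0" "\<And>x. x \<in> K \<Longrightarrow> c \<le> l x"
proof (cases "K = {}")
  case False
  have "continuous_on K l"
    using assms(1,3) continuous_on_subset by (auto simp: conj_inv_length_function_def)
  then obtain x0 where x0: "x0 \<in> K" "\<And>y. y \<in> K \<Longrightarrow> l x0 \<le> l y"
    using continuous_attains_inf[OF assms(2) False, of l] by auto
  have "l x0 > 0"
    using assms(1,3,4) x0(1) by (force simp: conj_inv_length_function_def)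
  then show ?thesis using that x0(2) by blast
qed (use that[of 1] in simp)

lemma unitary_rep_diff_one_le_length:
  fixes V :: "complex^'d^'d \<Rightarrow> complex^'m^'m"
  assumes G: "compact_matrix_group G" and L: "conj_inv_length_function G l"
    and V: "unitary_rep G V"
  obtains C where "\<And>x. x \<in> G \<Longrightarrow> norm (V x - mat 1) \<le> C * l x"
proof -
  define F where "F x = norm (V x - mat 1)" for x
  define K where "K = G \<inter> F -` {1/2..}"
  define B where "B = 2 * norm (mat 1 :: complex^'m^'m)"
  have l_nonneg: "\<And>x. x \<in> G \<Longrightarrow> 0 \<le> l x"
    using L by (simp add: conj_inv_length_function_def)
  have "continuous_on G F"
    using V unfolding F_def unitary_rep_def by (intro continuous_intros) auto
  moreover have "compact G" "mat 1 \<in> G"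
    using G by (auto simp: compact_matrix_group_def)
  ultimately have "closed K"
    unfolding K_def by (intro continuous_closed_preimage compact_imp_closed closed_atLeast)
  then have "compact K"
    using compact_Int_closed[OF \<open>compact G\<close>, of K] by (metis K_def Int_absorb Int_assoc)
  moreover have "mat 1 \<notin> K"
    using unitary_rep_one[OF V \<open>mat 1 \<in> G\<close>] by (simp add: K_def F_def)
  ultimately obtain c where c: "c > 0" "\<And>x. x \<in> K \<Longrightarrow> c \<le> l x"
    using length_bounded_below_on_compact[OF L] by (metis K_def inf_le1)
  have F_le_B: "F x \<le> B" if "x \<in> G" for x
  proof -
    have "adj (V x) ** V x = mat 1"
      using V that by (simp add: unitary_rep_def unitary_mat_def)
    then have "norm (V x) = norm (mat 1 :: complex^'m^'m)"
      by (rule norm_unitary)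
    then show ?thesis
      unfolding F_def B_def using norm_triangle_ineq4[of "V x" "mat 1"] by simp
  qed
  have "F x \<le> (1 + B) / c * l x" if x: "x \<in> G" for x
  proof (cases "V x = mat 1")
    case True
    then show ?thesis using l_nonneg[OF x] c(1) B_def by (simp add: F_def)
  next
    case False
    then have F_pos: "F x > 0" by (simp add: F_def)
    obtain j where j: "1 \<le> j" "real j \<le> 1 / F x + 1" "norm (mpow (V x) j - mat 1) > 1/2"
      using exists_mpow_far_from_one[OF False] unfolding F_def by blast
    have "mpow x j \<in> K"
      using j(3) mpow_in_group[OF G x] unitary_rep_mpow[OF G V x] by (simp add: K_def F_def)
    then have "c \<le> l (mpow x j)" by (rule c(2))
    also have "\<dots> \<le> real j * l x" by (rule length_mpow_le[OF G L x])
    also have "\<dots> \<le> (1 / F x + 1) * l x" using j(2) l_nonneg[OF x] by (rule mult_right_mono)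
    finally have "c * F x \<le> (1 + F x) * l x" using F_pos by (simp add: field_simps)
    also have "\<dots> \<le> (1 + B) * l x" using F_le_B[OF x] l_nonneg[OF x] by (simp add: mult_right_mono)
    finally show ?thesis using c(1) by (simp add: field_simps)
  qed
  then show ?thesis using that unfolding F_def by blast
qed

subsection \<open>Berezin symbols and the Lipschitz seminorms\<close>

definition outer_prod :: "complex^'n \<Rightarrow> complex^'n^'n" where
  "outer_prod u = (\<chi> p q. u$p * cnj (u$q))"

lemma matrix_conj_outer_prod: "A ** outer_prod u ** adj A = outer_prod (A *v u)"
proof -
  have "(\<Sum>r\<in>UNIV. (\<Sum>s\<in>UNIV. A$p$s * (u$s * cnj (u$r))) * cnj (A$q$r))
      = (\<Sum>s\<in>UNIV. A$p$s * u$s) * cnj (\<Sum>r\<in>UNIV. A$q$r * u$r)" for p q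
  proof -
    have "(\<Sum>r\<in>UNIV. (\<Sum>s\<in>UNIV. A$p$s * (u$s * cnj (u$r))) * cnj (A$q$r))
        = (\<Sum>r\<in>UNIV. \<Sum>s\<in>UNIV. (A$p$s * u$s) * (cnj (A$q$r) * cnj (u$r)))"
      by (simp only: sum_distrib_right) (simp add: mult_ac)
    also have "\<dots> = (\<Sum>s\<in>UNIV. A$p$s * u$s) * (\<Sum>r\<in>UNIV. cnj (A$q$r) * cnj (u$r))"
      by (subst sum.swap) (rule sum_product[symmetric])
    finally show ?thesis by simp
  qed
  then show ?thesis
    by (simp add: vec_eq_iff outer_prod_def matrix_matrix_mult_def matrix_vector_mult_def)
qed

lemma trace_mult_outer_prod: "trace (S ** outer_prod w) = cinner w (S *v w)"
  by (simp add: outer_prod_def trace_def matrix_matrix_mult_def cinner_def matrix_vector_mult_def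
      sum_distrib_left mult_ac)

lemma Pn_eq_outer_prod: "Pn \<xi> = outer_prod (tensv \<xi>)"
  by (simp add: Pn_def outer_prod_def)

lemma berezin_eq_cinner:
  "berezin U \<xi> S y = cinner (tensU (U y) *v tensv \<xi>) (S *v (tensU (U y) *v tensv \<xi>))"
  by (simp add: berezin_def alphan_def Pn_eq_outer_prod matrix_conj_outer_prod trace_mult_outer_prod)

lemma berezin_diff: "berezin U \<xi> (A - B) y = berezin U \<xi> A y - berezin U \<xi> B y"
  by (simp add: berezin_def matrix_diff_rdistrib trace_sub)

lemma berezin_translate:
  fixes S :: "complex^('n::finite \<Rightarrow> 'a::finite)^('n \<Rightarrow> 'a)"
  assumes G: "compact_matrix_group G" and U: "unitary_rep G U" and x: "x \<in> G" and y: "y \<in> G"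
  shows "berezin U \<xi> S (matrix_inv x ** y) = berezin U \<xi> (alphan U x S) y"
proof -
  let ?V = "\<lambda>x. tensU (U x) :: complex^('n \<Rightarrow> 'a)^('n \<Rightarrow> 'a)"
  let ?P = "Pn \<xi> :: complex^('n \<Rightarrow> 'a)^('n \<Rightarrow> 'a)"
  have V: "unitary_rep G ?V" by (rule unitary_rep_tensU[OF U])
  have "matrix_inv x \<in> G" using G x by (simp add: compact_matrix_group_def)
  then have V_translate: "?V (matrix_inv x ** y) = adj (?V x) ** ?V y"
    using V y unitary_rep_matrix_inv[OF G V x] by (simp add: unitary_rep_def)
  have "berezin U \<xi> (alphan U x S) y = trace (?V x ** (S ** adj (?V x) ** (?V y ** ?P ** adj (?V y))))"
    by (simp add: berezin_def alphan_def matrix_mul_assoc)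
  also have "\<dots> = trace ((S ** adj (?V x) ** (?V y ** ?P ** adj (?V y))) ** ?V x)"
    by (rule trace_mul_sym)
  also have "\<dots> = trace (S ** ((adj (?V x) ** ?V y) ** ?P ** adj (adj (?V x) ** ?V y)))"
    by (simp add: adj_mult matrix_mul_assoc)
  also have "\<dots> = berezin U \<xi> S (matrix_inv x ** y)"
    by (simp add: berezin_def alphan_def V_translate)
  finally show ?thesis by simp
qed

lemma sum_UNIV_prod:
  "(\<Sum>p\<in>(UNIV::('x::finite \<times> 'y::finite) set). g p) = (\<Sum>i\<in>UNIV. \<Sum>a\<in>UNIV. g (i, a))"
  using sum.cartesian_product[of "\<lambda>i a. g (i, a)" "UNIV::'y set" "UNIV::'x set"] by simp

lemma norm_vec_le_sum: "norm (x::'a::real_normed_vector^'n) \<le> (\<Sum>i\<in>UNIV. norm (x$i))"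
  unfolding norm_vec_def by (rule L2_set_le_sum) simp

lemma norm_blockop:
  fixes S :: "'k::finite \<Rightarrow> 'k \<Rightarrow> complex^'n::finite^'n"
  shows "norm (blockop S) = norm ((\<chi> i j. S i j) :: (complex^'n^'n)^'k^'k)"
proof -
  have "(norm (blockop S))\<^sup>2 = (\<Sum>i\<in>UNIV. \<Sum>a\<in>UNIV. \<Sum>j\<in>UNIV. \<Sum>b\<in>UNIV. (cmod (S i j $ a $ b))\<^sup>2)"
    by (simp add: norm_matrix_power2 sum_UNIV_prod blockop_def)
  also have "\<dots> = (norm ((\<chi> i j. S i j) :: (complex^'n^'n)^'k^'k))\<^sup>2"
    by (simp add: norm_vec_power2) (rule sum.cong[OF refl], rule sum.swap)
  finally show ?thesis by (simp add: power2_eq_iff_nonneg)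
qed

lemma norm_blockop_le_sum:
  fixes S :: "'k::finite \<Rightarrow> 'k \<Rightarrow> complex^'n::finite^'n"
  shows "norm (blockop S) \<le> (\<Sum>i\<in>UNIV. \<Sum>j\<in>UNIV. norm (S i j))"
proof -
  have "norm ((\<chi> i j. S i j) :: (complex^'n^'n)^'k^'k) \<le> (\<Sum>i\<in>UNIV. norm (\<chi> j. S i j))"
    using norm_vec_le_sum[of "(\<chi> i j. S i j) :: (complex^'n^'n)^'k^'k"] by simp
  also have "\<dots> \<le> (\<Sum>i\<in>UNIV. \<Sum>j\<in>UNIV. norm (S i j))"
    using norm_vec_le_sum[of "\<chi> j. S _ j"] by (intro sum_mono) simp
  finally show ?thesis unfolding norm_blockop .
qed

text \<open>The compressed matrix is \<open>(1 \<otimes> w)\<^sup>* B (1 \<otimes> w)\<close>, and \<open>1 \<otimes> w\<close> is an isometry.\<close>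
lemma opnorm_compression_le_opnorm_blockop:
  fixes S :: "'k::finite \<Rightarrow> 'k \<Rightarrow> complex^'i::finite^'i"
  assumes w: "norm w = 1"
  shows "opnorm ((\<chi> i j. cinner w (S i j *v w)) :: complex^'k^'k) \<le> opnorm (blockop S)"
proof (rule opnorm_leI)
  fix c :: "complex^'k"
  let ?M = "(\<chi> i j. cinner w (S i j *v w)) :: complex^'k^'k"
  define v :: "complex^('k \<times> 'i)" where "v = (\<chi> p. c$(fst p) * w$(snd p))"
  have "(norm v)\<^sup>2 = (norm c)\<^sup>2 * (norm w)\<^sup>2"
    by (simp add: v_def norm_vec_power2 sum_UNIV_prod norm_mult power_mult_distrib sum_product)
  then have norm_v: "norm v = norm c"
    using w by (simp add: power2_eq_iff_nonneg)
  have Mc: "(?M *v c)$i = (\<Sum>a\<in>UNIV. cnj (w$a) * (blockop S *v v)$(i,a))" for i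
  proof -
    have "(?M *v c)$i = (\<Sum>j\<in>UNIV. \<Sum>a\<in>UNIV. \<Sum>b\<in>UNIV. cnj (w$a) * (S i j $ a $ b * (c$j * w$b)))"
      by (simp add: matrix_vector_mult_def cinner_def sum_distrib_left sum_distrib_right mult_ac)
    also have "\<dots> = (\<Sum>a\<in>UNIV. \<Sum>j\<in>UNIV. \<Sum>b\<in>UNIV. cnj (w$a) * (S i j $ a $ b * (c$j * w$b)))"
      by (rule sum.swap)
    also have "\<dots> = (\<Sum>a\<in>UNIV. cnj (w$a) * (blockop S *v v)$(i,a))"
      by (simp add: matrix_vector_mult_def blockop_def v_def sum_UNIV_prod sum_distrib_left)
    finally show ?thesis .
  qed
  have "(norm (?M *v c))\<^sup>2
      \<le> (\<Sum>i\<in>UNIV. (\<Sum>a\<in>UNIV. (cmod (cnj (w$a)))\<^sup>2) * (\<Sum>a\<in>UNIV. (cmod ((blockop S *v v)$(i,a)))\<^sup>2))"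
    unfolding norm_vec_power2 Mc by (intro sum_mono cmod_sum_mult_power2_le)
  also have "\<dots> = (norm (blockop S *v v))\<^sup>2"
    using w by (simp add: norm_vec_power2[of w, symmetric] norm_vec_power2[of "blockop S *v v"]
        sum_UNIV_prod)
  finally have "norm (?M *v c) \<le> norm (blockop S *v v)"
    by (rule power2_le_imp_le) simp
  also have "\<dots> \<le> opnorm (blockop S) * norm c"
    using norm_matrix_vector_mult_le_opnorm norm_v by metis
  finally show "norm (?M *v c) \<le> opnorm (blockop S) * norm c" .
qed

lemma supnormk_berezin_translate_le:
  fixes T :: "'k::finite \<Rightarrow> 'k \<Rightarrow> complex^('n::finite \<Rightarrow> 'a::finite)^('n \<Rightarrow> 'a)"
  assumes G: "compact_matrix_group G" and U: "unitary_rep G U" and \<xi>: "norm \<xi> = 1"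
    and x: "x \<in> G"
  shows "supnormk G (\<lambda>i j y. berezin U \<xi> (T i j) (matrix_inv x ** y) - berezin U \<xi> (T i j) y)
    \<le> opnorm (blockop (\<lambda>i j. alphan U x (T i j) - T i j))"
  unfolding supnormk_def
proof (rule cSUP_least)
  show "G \<noteq> {}" using G by (auto simp: compact_matrix_group_def)
next
  fix y assume y: "y \<in> G"
  define w where "w = (tensU (U y) :: complex^('n \<Rightarrow> 'a)^('n \<Rightarrow> 'a)) *v tensv \<xi>"
  have "adj (tensU (U y) :: complex^('n \<Rightarrow> 'a)^('n \<Rightarrow> 'a)) ** tensU (U y) = mat 1"
    using unitary_rep_tensU[OF U, where 'n='n] y by (simp add: unitary_rep_def unitary_mat_def)
  then have "norm w = 1"
    unfolding w_def by (simp add: norm_unitary_mult_vector norm_tensv[OF \<xi>])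
  moreover have "berezin U \<xi> (T i j) (matrix_inv x ** y) - berezin U \<xi> (T i j) y
      = cinner w ((alphan U x (T i j) - T i j) *v w)" for i j
    unfolding berezin_translate[OF G U x y] berezin_diff[symmetric] w_def by (rule berezin_eq_cinner)
  ultimately show "opnorm ((\<chi> i j. berezin U \<xi> (T i j) (matrix_inv x ** y) - berezin U \<xi> (T i j) y)
      :: complex^'k^'k) \<le> opnorm (blockop (\<lambda>i j. alphan U x (T i j) - T i j))"
    using opnorm_compression_le_opnorm_blockop[of w "\<lambda>i j. alphan U x (T i j) - T i j"] by simp
qed

lemma Lk_berezin_le_Lnk:
  assumes "compact_matrix_group G" "unitary_rep G U" "norm \<xi> = 1" "\<forall>x\<in>G. 0 \<le> l x"
  shows "Lk l G (\<lambda>i j. berezin U \<xi> (T i j)) \<le> Lnk l G U T"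
  unfolding Lk_def Lnk_def
proof (rule SUP_mono)
  fix x assume x: "x \<in> G - {mat 1}"
  then show "\<exists>m\<in>G - {mat 1}.
      ennreal (supnormk G (\<lambda>i j y. berezin U \<xi> (T i j) (matrix_inv x ** y) - berezin U \<xi> (T i j) y) / l x)
      \<le> ennreal (opnorm (blockop (\<lambda>i j. alphan U m (T i j) - T i j)) / l m)"
    using assms(4) supnormk_berezin_translate_le[OF assms(1-3)]
    by (intro bexI[OF _ x] ennreal_leI divide_right_mono) auto
qed

lemma Lnk_less_top:
  fixes T :: "'k::finite \<Rightarrow> 'k \<Rightarrow> complex^('n::finite \<Rightarrow> 'a::finite)^('n \<Rightarrow> 'a)"
  assumes G: "compact_matrix_group G" and L: "conj_inv_length_function G l"
    and U: "unitary_rep G U"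
  shows "Lnk l G U T < top"
proof -
  let ?V = "\<lambda>x. tensU (U x) :: complex^('n \<Rightarrow> 'a)^('n \<Rightarrow> 'a)"
  let ?c = "norm (mat 1 :: complex^('n \<Rightarrow> 'a)^('n \<Rightarrow> 'a)) + 1"
  have V: "unitary_rep G ?V" by (rule unitary_rep_tensU[OF U])
  obtain C where C: "\<And>x. x \<in> G \<Longrightarrow> norm (?V x - mat 1) \<le> C * l x"
    using unitary_rep_diff_one_le_length[OF G L V] by blast
  define K where "K = (\<Sum>i\<in>UNIV. \<Sum>j\<in>UNIV. ?c * norm (T i j) * C)"
  have "opnorm (blockop (\<lambda>i j. alphan U x (T i j) - T i j)) / l x \<le> K" if x: "x \<in> G - {mat 1}" for x
  proof -
    have l_pos: "l x > 0"
      using L x by (force simp: conj_inv_length_function_def)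
    have "adj (?V x) ** ?V x = mat 1"
      using V x by (simp add: unitary_rep_def unitary_mat_def)
    then have "norm (alphan U x (T i j) - T i j) \<le> ?c * norm (T i j) * (C * l x)" for i j
      unfolding alphan_def
      by (rule order_trans[OF norm_unitary_conj_diff_le]) (use C x in \<open>auto intro: mult_left_mono\<close>)
    then have "opnorm (blockop (\<lambda>i j. alphan U x (T i j) - T i j)) \<le> K * l x"
      unfolding K_def sum_distrib_right
      by (intro order_trans[OF opnorm_le_norm] order_trans[OF norm_blockop_le_sum] sum_mono)
        (simp add: mult.assoc)
    then show ?thesis using l_pos by (simp add: pos_divide_le_eq)
  qed
  then have "Lnk l G U T \<le> ennreal K"
    unfolding Lnk_def by (intro SUP_least ennreal_leI)
  then show ?thesis
    using ennreal_less_top le_less_trans by blast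
qed

theorem lemma8p1:
  fixes G :: "(complex^'d^'d) set"
    and l :: "complex^'d^'d \<Rightarrow> real"
    and U :: "complex^'d^'d \<Rightarrow> complex^'a::finite^'a"
    and \<xi> :: "complex^'a"
    and T :: "'k::finite \<Rightarrow> 'k \<Rightarrow> complex^('n::finite \<Rightarrow> 'a)^('n \<Rightarrow> 'a)"
    and \<epsilon> :: real
  assumes "connected_compact_semisimple_group G"
    and "conj_inv_length_function G l"
    and "irreducible_rep G U"
    and "highest_weight_vector G U \<xi>"
    and "norm \<xi> = 1"
    and "\<forall>i j. T i j \<in> opsOn (Hn G U \<xi> :: (complex^('n \<Rightarrow> 'a)) set)"
    and "\<epsilon> > 0"
  shows "Lk l G (\<lambda>i j. berezin U \<xi> (T i j)) < Lnk l G U T + ennreal \<epsilon>"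
proof -
  have G: "compact_matrix_group G"
    using assms(1) by (simp add: connected_compact_semisimple_group_def)
  have U: "unitary_rep G U"
    using assms(3) by (simp add: irreducible_rep_def)
  have "\<forall>x\<in>G. 0 \<le> l x"
    using assms(2) by (simp add: conj_inv_length_function_def)
  then have "Lk l G (\<lambda>i j. berezin U \<xi> (T i j)) \<le> Lnk l G U T"
    by (rule Lk_berezin_le_Lnk[OF G U assms(5)])
  also have "\<dots> < Lnk l G U T + ennreal \<epsilon>"
    using Lnk_less_top[OF G assms(2) U, of T] assms(7) ennreal_add_left_cancel_less[of _ 0]
    by simp
  finally show ?thesis .
qed

end
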